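(* Let $n\ge1$, $s\in(0,1)$, $\varrho\in(0,+\infty]$, and let $M:\mathbb{R}^n\times B_\varrho\to\mathbb{R}^{n\times n}$ be Lipschitz continuous with Lipschitz constant $C_M$ and such that, for some $\alpha\ge\beta>0$, $\beta|\xi|\le|M(x-y,y)\xi|\le\alpha|\xi|$ for all $x\in\mathbb{R}^n$, $y\in B_\varrho$, $\xi\in\mathbb{R}^n$. Let $K(x,z)=\dfrac{c_{n,s}\chi_{[0,\varrho)}(|x-z|)}{|M(z,x-z)(x-z)|^{n+2s}}$ (with $K(x,z)=0$ if $|x-z|\ge\varrho$). Then for every $x\in\mathbb{R}^n$, $$\int_{B_1}|y|\,|K(x,x+y)-K(x,x-y)|\,dy\le C_\star C_M\,s,$$ where $C_\star>0$ depends only on $n,\alpha,\beta$; in particular $\sup_{x\in\mathbb{R}^n}\int_{B_1}|y|\,|K(x,x+y)-K(x,x-y)|\,dy<+\infty$.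
   Context: $B_r$ is the open ball of radius $r$ centered at $0$ ($B_{+\infty}=\mathbb{R}^n$); $\chi_{[0,\varrho)}$ the indicator of $[0,\varrho)$; $c_{n,s}=\frac{2^{2s}\Gamma\left(\frac{n+2s}{2}\right)}{\pi^{n/2}\Gamma(2-s)}s(1-s)$. *)

theory Defs
  imports "HOL-Analysis.Analysis"
begin

definition c_ns :: "nat \<Rightarrow> real \<Rightarrow> real" where
  "c_ns n s = (2 powr (2 * s) * Gamma ((real n + 2 * s) / 2)) /
              (pi powr (real n / 2) * Gamma (2 - s)) * s * (1 - s)"

definition eball0 :: "ereal \<Rightarrow> ('a::real_normed_vector) set" where
  "eball0 \<rho> = {y. ereal (norm y) < \<rho>}"

definition kernelK ::
  "real \<Rightarrow> ereal \<Rightarrow> (real^'n \<Rightarrow> real^'n \<Rightarrow> real^'n^'n) \<Rightarrow> real^'n \<Rightarrow> real^'n \<Rightarrow> real" where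
  "kernelK s \<rho> M x z =
     (if ereal (norm (x - z)) < \<rho>
      then c_ns CARD('n) s / (norm (M z (x - z) *v (x - z))) powr (real CARD('n) + 2 * s)
      else 0)"

end

theory Submission
  imports Defs
begin

(* With p = n + 2s, K(x, x + y) and K(x, x - y) are c_{n,s} |A y|^-p and c_{n,s} |B y|^-p for
   matrices A = M(x + y, -y) and B = M(x - y, y) whose arguments are 4|y| apart, so
   |A y - B y| <= 4 C_M |y|^2 by Lipschitz continuity.  Since |A y|, |B y| >= beta |y|, the mean
   value theorem for t^-p on [beta |y|, oo) yields
     |y| |K(x, x + y) - K(x, x - y)| <= 4 C_M c_{n,s} p beta^(-p-1) |y|^(2-p).
   Summing over the dyadic shells 2^-(k+1) <= |y| < 2^-k, the integral of |y|^(2-p) over B_1 is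
   O(1/(1 - s)); this blow-up is cancelled by the factor s (1 - s) in c_{n,s}, which leaves a
   bound linear in C_M s. *)

lemma norm_matrix_vector_mult_le:
  fixes A :: "real^'n^'m"
  shows "norm (A *v x) \<le> norm A * norm x"
proof -
  have "norm (A *v x) = L2_set (\<lambda>i. \<bar>inner (A $ i) x\<bar>) UNIV"
    by (simp add: norm_vec_def matrix_vector_mul_component)
  also have "\<dots> \<le> L2_set (\<lambda>i. norm (A $ i) * norm x) UNIV"
    by (rule L2_set_mono) (simp_all add: Cauchy_Schwarz_ineq2)
  also have "\<dots> = norm A * norm x"
    by (simp add: norm_vec_def L2_set_left_distrib)
  finally show ?thesis .
qed

lemma abs_powr_neg_diff_le:
  fixes a b m p :: real
  assumes "0 < m" "m \<le> a" "m \<le> b" "0 \<le> p"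
  shows "\<bar>a powr - p - b powr - p\<bar> \<le> p * m powr (- p - 1) * \<bar>a - b\<bar>"
proof -
  have "norm (a powr - p - b powr - p) \<le> p * m powr (- p - 1) * norm (a - b)"
  proof (rule field_differentiable_bound)
    fix z :: real assume "z \<in> {m..}"
    then have z: "m \<le> z" "0 < z" using assms by auto
    show "((\<lambda>z. z powr - p) has_field_derivative - p * z powr (- p - 1)) (at z within {m..})"
      using z by (auto intro!: derivative_eq_intros)
    show "norm (- p * z powr (- p - 1)) \<le> p * m powr (- p - 1)"
      using z assms by (auto intro!: mult_left_mono powr_mono2')
  qed (use assms in auto)
  then show ?thesis by simp
qed

lemma powr_le_add_powr:
  fixes x t a b :: real
  assumes "0 < x" "a \<le> t" "t \<le> b"
  shows "x powr t \<le> x powr a + x powr b"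
proof (cases "1 \<le> x")
  case True
  then have "x powr t \<le> x powr b" using assms by (intro powr_mono)
  then show ?thesis by (simp add: add_increasing)
next
  case False
  then have "x powr t \<le> x powr a" using assms by (intro powr_mono') auto
  then show ?thesis by (simp add: add_increasing2)
qed

lemma one_minus_half_powr_ge:
  fixes t :: real
  assumes "0 \<le> t" "t \<le> 2"
  shows "t / 4 \<le> 1 - (1/2) powr t"
proof -
  define u where "u = t * ln 2"
  have "0 \<le> u" "u \<le> 2 * ln 2" unfolding u_def using assms by auto
  have "t * (1 + u) \<le> t * (4 * ln 2)"
    using assms ln2_ge_two_thirds \<open>u \<le> 2 * ln 2\<close> by (intro mult_left_mono) auto
  then have "t / 4 \<le> u / (1 + u)"
    using \<open>0 \<le> u\<close> by (simp add: u_def field_simps)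
  also have "\<dots> = 1 - 1 / (1 + u)"
    using \<open>0 \<le> u\<close> by (simp add: field_simps)
  also have "1 / (1 + u) \<ge> 1 / exp u"
    using \<open>0 \<le> u\<close> exp_ge_add_one_self[of u] by (intro divide_left_mono) auto
  then have "1 - 1 / (1 + u) \<le> 1 - 1 / exp u" by simp
  also have "1 / exp u = (1/2) powr t"
    by (simp add: u_def powr_def ln_div exp_minus field_simps)
  finally show ?thesis .
qed

lemma dyadic_interval_exists:
  fixes t :: real
  assumes "0 < t" "t < 1"
  obtains j where "(1/2) ^ Suc j \<le> t" "t < (1/2) ^ j"
proof -
  have "\<exists>j. \<not> (1/2) ^ j \<le> t \<and> (1/2) ^ Suc j \<le> t"
  proof (rule exists_least_lemma)
    show "\<not> (1/2) ^ 0 \<le> t" using assms by simp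
    obtain n where "(1/2) ^ n < t" using real_arch_pow_inv[OF assms(1), of "1/2"] by auto
    then show "\<exists>n. (1/2) ^ n \<le> t" by (auto intro: less_imp_le)
  qed
  then show ?thesis using that by force
qed

lemma powr_le_on_dyadic_interval:
  fixes t e :: real
  assumes "- real N \<le> e" "(1/2) ^ Suc j \<le> t" "t < (1/2) ^ j"
  shows "t powr e \<le> 2 ^ N * ((1/2) ^ j) powr e"
proof (cases "0 \<le> e")
  case True
  then have "t powr e \<le> ((1/2) ^ j) powr e" using assms by (intro powr_mono2) auto
  also have "\<dots> \<le> 2 ^ N * ((1/2) ^ j) powr e" by simp
  finally show ?thesis .
next
  case False
  then have "t powr e \<le> ((1/2) ^ Suc j) powr e"
    using assms by (intro powr_mono2') auto
  also have "\<dots> = 2 powr (- e) * ((1/2) ^ j) powr e"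
    by (simp add: powr_mult powr_divide powr_minus_divide)
  also have "2 powr (- e) \<le> 2 powr (real N)"
    using assms by (intro powr_mono) auto
  finally show ?thesis by (simp add: powr_realpow)
qed

lemma indicator_ball_norm_powr_le_dyadic_sum:
  fixes e :: real and y :: "'a::real_normed_vector"
  assumes "- real N \<le> e"
  shows "indicator (ball 0 1) y * ennreal (norm y powr e)
    \<le> (\<Sum>k. ennreal (2 ^ N * ((1/2) ^ k) powr e) *
             indicator (ball 0 ((1/2) ^ k) - ball 0 ((1/2) ^ Suc k)) y)"
    (is "_ \<le> (\<Sum>k. ?f k)")
proof (cases "y \<in> ball 0 1 \<and> y \<noteq> 0")
  case True
  then obtain j where j: "(1/2) ^ Suc j \<le> norm y" "norm y < (1/2) ^ j"
    using dyadic_interval_exists[of "norm y"] by auto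
  then have "norm y powr e \<le> 2 ^ N * ((1/2) ^ j) powr e"
    using assms by (intro powr_le_on_dyadic_interval)
  then have "indicator (ball 0 1) y * ennreal (norm y powr e) \<le> ?f j"
    using True j by (simp add: ennreal_leI)
  also have "\<dots> = (\<Sum>k\<in>{j}. ?f k)"
    by (simp del: sum_mult_indicator)
  also have "\<dots> \<le> (\<Sum>k. ?f k)"
    by (rule sum_le_suminf) (auto intro: summableI)
  finally show ?thesis .
qed auto

lemma nn_integral_ball_norm_powr_le:
  fixes e :: real
  defines "N \<equiv> DIM('a::euclidean_space)"
  defines "q \<equiv> (1/2) powr (e + real N)"
  assumes "0 < e + real N"
  shows "(\<integral>\<^sup>+ y. indicator (ball (0::'a) 1) y * ennreal (norm y powr e) \<partial>lborel)
     \<le> ennreal (2 ^ N * unit_ball_vol N / (1 - q))"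
proof -
  define r where "r k = (1/2::real) ^ k" for k
  define S where "S k = ball (0::'a) (r k) - ball 0 (r (Suc k))" for k
  define V where "V = unit_ball_vol N"
  have "0 \<le> q" "q < 1" unfolding q_def using assms by (auto simp: powr01_less_one)
  have "0 \<le> V" unfolding V_def by simp
  have sets_S: "S k \<in> sets lborel" for k unfolding S_def by auto
  have "(\<integral>\<^sup>+ y. indicator (ball (0::'a) 1) y * ennreal (norm y powr e) \<partial>lborel)
      \<le> (\<integral>\<^sup>+ y. (\<Sum>k. ennreal (2 ^ N * r k powr e) * indicator (S k) y) \<partial>lborel)"
    unfolding S_def r_def using assms
    by (intro nn_integral_mono indicator_ball_norm_powr_le_dyadic_sum) simp
  also have "\<dots> = (\<Sum>k. \<integral>\<^sup>+ y. ennreal (2 ^ N * r k powr e) * indicator (S k) y \<partial>lborel)"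
    by (rule nn_integral_suminf) (use sets_S in auto)
  also have "\<dots> = (\<Sum>k. ennreal (2 ^ N * r k powr e) * emeasure lborel (S k))"
    using sets_S by (simp add: nn_integral_cmult_indicator)
  also have "\<dots> \<le> (\<Sum>k. ennreal (2 ^ N * V * q ^ k))"
  proof (rule suminf_le)
    fix k
    have "r k > 0" by (simp add: r_def)
    have "emeasure lborel (S k) \<le> emeasure lborel (ball (0::'a) (r k))"
      unfolding S_def by (rule emeasure_mono) auto
    also have "\<dots> = ennreal (V * r k ^ N)"
      using emeasure_ball[of "r k" "0::'a"] \<open>r k > 0\<close> by (simp add: V_def N_def)
    finally have "ennreal (2 ^ N * r k powr e) * emeasure lborel (S k)
        \<le> ennreal (2 ^ N * r k powr e * (V * r k ^ N))"
      using \<open>0 \<le> V\<close> \<open>r k > 0\<close> by (simp add: ennreal_mult' mult_left_mono)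
    also have "2 ^ N * r k powr e * (V * r k ^ N) = 2 ^ N * V * (r k powr e * r k powr real N)"
      using \<open>r k > 0\<close> by (simp add: powr_realpow)
    also have "r k powr e * r k powr real N = r k powr (e + real N)"
      by (simp add: powr_add)
    also have "\<dots> = q ^ k"
      by (simp add: r_def q_def powr_realpow[symmetric] powr_powr powr_power mult.commute)
    finally show "ennreal (2 ^ N * r k powr e) * emeasure lborel (S k) \<le> ennreal (2 ^ N * V * q ^ k)" .
  qed (auto intro: summableI)
  also have "\<dots> = ennreal (2 ^ N * V / (1 - q))"
    using \<open>0 \<le> q\<close> \<open>q < 1\<close> \<open>0 \<le> V\<close>
    by (simp add: suminf_ennreal2 summable_geometric suminf_mult suminf_geometric divide_inverse)
  finally show ?thesis by (simp add: V_def)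
qed

lemma c_ns_nonneg: "0 < s \<Longrightarrow> s < 1 \<Longrightarrow> 0 \<le> c_ns n s"
  unfolding c_ns_def
  by (intro mult_nonneg_nonneg divide_nonneg_nonneg) (auto intro!: less_imp_le[OF Gamma_real_pos])

lemma c_ns_le_mult:
  assumes "1 \<le> n"
  obtains A where "0 < A" "\<And>s. 0 < s \<Longrightarrow> s < 1 \<Longrightarrow> c_ns n s \<le> A * s * (1 - s)"
proof -
  have Gamma_cont: "continuous_on {a..b} (Gamma :: real \<Rightarrow> real)" if "0 < a" for a b
    using that by (intro continuous_on_Gamma) auto
  obtain x1 :: real where x1: "x1 \<in> {1/2..real n/2 + 1}" "\<forall>y\<in>{1/2..real n/2 + 1}. Gamma y \<le> Gamma x1"
    using continuous_attains_sup[OF compact_Icc _ Gamma_cont[of "1/2" "real n/2 + 1"]] by auto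
  obtain x0 :: real where x0: "x0 \<in> {1..2}" "\<forall>y\<in>{1..2}. Gamma x0 \<le> Gamma y"
    using continuous_attains_inf[OF compact_Icc _ Gamma_cont[of 1 2]] by auto
  have "0 < Gamma x0" "0 < Gamma x1" using x0(1) x1(1) by auto
  show ?thesis
  proof (rule that[of "4 * Gamma x1 / Gamma x0"])
    show "0 < 4 * Gamma x1 / Gamma x0" using \<open>0 < Gamma x0\<close> \<open>0 < Gamma x1\<close> by simp
    fix s :: real assume s: "0 < s" "s < 1"
    have "(real n + 2 * s) / 2 \<in> {1/2..real n/2 + 1}" using s assms by auto
    then have "2 powr (2 * s) * Gamma ((real n + 2 * s) / 2) \<le> 4 * Gamma x1"
      using x1(2) powr_mono[of "2 * s" 2 2] s by (intro mult_mono) auto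
    moreover have "1 * Gamma x0 \<le> pi powr (real n / 2) * Gamma (2 - s)"
      using x0 s pi_gt3 by (intro mult_mono ge_one_powr_ge_zero) auto
    ultimately have "2 powr (2 * s) * Gamma ((real n + 2 * s) / 2) / (pi powr (real n / 2) * Gamma (2 - s))
        \<le> 4 * Gamma x1 / (1 * Gamma x0)"
      using \<open>0 < Gamma x0\<close> \<open>0 < Gamma x1\<close> s by (intro frac_le) auto
    then have "2 powr (2 * s) * Gamma ((real n + 2 * s) / 2) / (pi powr (real n / 2) * Gamma (2 - s))
        * (s * (1 - s)) \<le> 4 * Gamma x1 / Gamma x0 * (s * (1 - s))"
      using s by (intro mult_right_mono) auto
    then show "c_ns n s \<le> 4 * Gamma x1 / Gamma x0 * s * (1 - s)"
      by (simp only: c_ns_def mult.assoc)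
  qed
qed

lemma kernelK_minus_eq:
  "kernelK s \<rho> M x (x - y) =
     (if ereal (norm y) < \<rho>
      then c_ns CARD('n) s * norm (M (x - y) y *v y) powr - (real CARD('n) + 2 * s) else 0)"
  for M :: "real^'n \<Rightarrow> real^'n \<Rightarrow> real^'n^'n"
  unfolding kernelK_def powr_minus_divide by simp

lemma dist_Pair_plus_minus_le:
  fixes x y :: "'a::real_normed_vector"
  shows "dist (x + y, - y) (x - y, y) \<le> 4 * norm y"
proof -
  have "dist (x + y, - y) (x - y, y) \<le> dist (x + y) (x - y) + dist (- y) y"
    unfolding dist_Pair_Pair by (rule sqrt_sum_squares_le_sum) auto
  also have "\<dots> = 4 * norm y"
    by (simp add: dist_norm norm_minus_commute[of "- y"] flip: scaleR_2)
  finally show ?thesis .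
qed

lemma abs_norm_reflected_matrix_diff_le:
  fixes M :: "real^'n \<Rightarrow> real^'n \<Rightarrow> real^'n^'n"
  assumes lip: "CM-lipschitz_on (UNIV \<times> eball0 \<rho>) (\<lambda>(x, y). M x y)"
    and y: "y \<in> eball0 \<rho>" "- y \<in> eball0 \<rho>"
  shows "\<bar>norm (M (x + y) (- y) *v y) - norm (M (x - y) y *v y)\<bar> \<le> 4 * CM * norm y ^ 2"
proof -
  let ?A = "M (x + y) (- y)" and ?B = "M (x - y) y"
  have "\<bar>norm (?A *v y) - norm (?B *v y)\<bar> \<le> norm ((?A - ?B) *v y)"
    using norm_triangle_ineq3[of "?A *v y" "?B *v y"] by (simp add: matrix_vector_mult_diff_rdistrib)
  also have "\<dots> \<le> dist ?A ?B * norm y"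
    unfolding dist_norm by (rule norm_matrix_vector_mult_le)
  also have "dist ?A ?B \<le> CM * dist (x + y, - y) (x - y, y)"
    using lipschitz_onD[OF lip, of "(x + y, - y)" "(x - y, y)"] y by auto
  also have "\<dots> \<le> CM * (4 * norm y)"
    using lipschitz_on_nonneg[OF lip] by (intro mult_left_mono dist_Pair_plus_minus_le)
  finally show ?thesis
    by (simp add: power2_eq_square mult_ac mult_right_mono)
qed

lemma norm_mult_kernelK_diff_le:
  fixes M :: "real^'n \<Rightarrow> real^'n \<Rightarrow> real^'n^'n" and s :: real
  defines "p \<equiv> real CARD('n) + 2 * s"
  assumes s: "0 < s" "s < 1" and "0 < \<beta>"
    and lip: "CM-lipschitz_on (UNIV \<times> eball0 \<rho>) (\<lambda>(x, y). M x y)"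
    and lower: "\<And>x y \<xi>. y \<in> eball0 \<rho> \<Longrightarrow> \<beta> * norm \<xi> \<le> norm (M (x - y) y *v \<xi>)"
  shows "norm y * \<bar>kernelK s \<rho> M x (x + y) - kernelK s \<rho> M x (x - y)\<bar>
    \<le> 4 * CM * c_ns CARD('n) s * p * \<beta> powr (- p - 1) * norm y powr (2 - p)"
proof (cases "y \<noteq> 0 \<and> ereal (norm y) < \<rho>")
  case False
  have "0 \<le> CM" using lip by (rule lipschitz_on_nonneg)
  with False s show ?thesis
    by (auto simp: kernelK_def p_def intro!: mult_nonneg_nonneg c_ns_nonneg)
next
  case True
  then have "0 < norm y" and y: "y \<in> eball0 \<rho>" "- y \<in> eball0 \<rho>"
    by (auto simp: eball0_def)
  define a where "a = norm (M (x + y) (- y) *v y)"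
  define b where "b = norm (M (x - y) y *v y)"
  define c where "c = c_ns CARD('n) s"
  have "0 \<le> c" unfolding c_def using s by (rule c_ns_nonneg)
  have "0 \<le> p" unfolding p_def using s by simp
  have K: "kernelK s \<rho> M x (x + y) = c * a powr - p" "kernelK s \<rho> M x (x - y) = c * b powr - p"
    using kernelK_minus_eq[of s \<rho> M x "- y"] kernelK_minus_eq[of s \<rho> M x y] True
    by (simp_all add: a_def b_def c_def p_def vec.neg)
  have "\<beta> * norm y \<le> a"
    using lower[OF y(2), where x = x and \<xi> = y] by (simp add: a_def)
  moreover have "\<beta> * norm y \<le> b"
    using lower[OF y(1)] by (simp add: b_def)
  moreover have "\<bar>a - b\<bar> \<le> 4 * CM * norm y ^ 2"
    unfolding a_def b_def using lip y by (rule abs_norm_reflected_matrix_diff_le)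
  ultimately have "\<bar>a powr - p - b powr - p\<bar> \<le> p * (\<beta> * norm y) powr (- p - 1) * (4 * CM * norm y ^ 2)"
    using \<open>0 < \<beta>\<close> \<open>0 < norm y\<close> \<open>0 \<le> p\<close>
    by (meson abs_powr_neg_diff_le mult_left_mono mult_pos_pos mult_nonneg_nonneg
        powr_ge_zero order_trans)
  then have "norm y * \<bar>kernelK s \<rho> M x (x + y) - kernelK s \<rho> M x (x - y)\<bar>
      \<le> norm y * (c * (p * (\<beta> * norm y) powr (- p - 1) * (4 * CM * norm y ^ 2)))"
    using \<open>0 \<le> c\<close> by (simp add: K abs_mult mult_left_mono flip: right_diff_distrib)
  also have "\<dots> = 4 * CM * c * p * \<beta> powr (- p - 1) * (norm y powr (- p - 1) * norm y powr 3)"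
    using \<open>0 < \<beta>\<close> \<open>0 < norm y\<close>
    by (simp add: powr_mult powr_realpow power2_eq_square power3_eq_cube mult_ac)
  also have "norm y powr (- p - 1) * norm y powr 3 = norm y powr (2 - p)"
    unfolding powr_add[symmetric] by (rule arg_cong[where f = "\<lambda>t. norm y powr t"]) simp
  finally show ?thesis by (simp add: c_def)
qed

lemma kernelK_moment_le:
  fixes M :: "real^'n \<Rightarrow> real^'n \<Rightarrow> real^'n^'n" and s :: real
  defines "p \<equiv> real CARD('n) + 2 * s"
  assumes s: "0 < s" "s < 1" and "0 < \<beta>"
    and lip: "CM-lipschitz_on (UNIV \<times> eball0 \<rho>) (\<lambda>(x, y). M x y)"
    and lower: "\<And>x y \<xi>. y \<in> eball0 \<rho> \<Longrightarrow> \<beta> * norm \<xi> \<le> norm (M (x - y) y *v \<xi>)"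
  shows "(\<integral>\<^sup>+ y. indicator (ball 0 1) y *
            ennreal (norm y * \<bar>kernelK s \<rho> M x (x + y) - kernelK s \<rho> M x (x - y)\<bar>) \<partial>lborel)
    \<le> ennreal (4 * CM * c_ns CARD('n) s * p * \<beta> powr (- p - 1) *
        (2 ^ CARD('n) * unit_ball_vol CARD('n) / (1 - (1/2) powr (2 - 2 * s))))"
proof -
  define D where "D = 4 * CM * c_ns CARD('n) s * p * \<beta> powr (- p - 1)"
  have "0 \<le> D"
    unfolding D_def p_def using s lipschitz_on_nonneg[OF lip] by (simp add: c_ns_nonneg)
  have "(\<integral>\<^sup>+ y. indicator (ball 0 1) y *
            ennreal (norm y * \<bar>kernelK s \<rho> M x (x + y) - kernelK s \<rho> M x (x - y)\<bar>) \<partial>lborel)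
      \<le> (\<integral>\<^sup>+ y. ennreal D * (indicator (ball (0::real^'n) 1) y * ennreal (norm y powr (2 - p))) \<partial>lborel)"
  proof (rule nn_integral_mono)
    fix y :: "real^'n"
    have "norm y * \<bar>kernelK s \<rho> M x (x + y) - kernelK s \<rho> M x (x - y)\<bar> \<le> D * norm y powr (2 - p)"
      unfolding D_def p_def using norm_mult_kernelK_diff_le[OF s \<open>0 < \<beta>\<close> lip lower] .
    then show "indicator (ball 0 1) y *
            ennreal (norm y * \<bar>kernelK s \<rho> M x (x + y) - kernelK s \<rho> M x (x - y)\<bar>)
        \<le> ennreal D * (indicator (ball 0 1) y * ennreal (norm y powr (2 - p)))"
      using \<open>0 \<le> D\<close> by (auto split: split_indicator simp flip: ennreal_mult intro: ennreal_leI)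
  qed
  also have "\<dots> = ennreal D * (\<integral>\<^sup>+ y. indicator (ball (0::real^'n) 1) y * ennreal (norm y powr (2 - p)) \<partial>lborel)"
    by (intro nn_integral_cmult borel_measurable_times_ennreal borel_measurable_indicator
        measurable_compose[OF _ measurable_ennreal]) auto
  also have "\<dots> \<le> ennreal D * ennreal (2 ^ CARD('n) * unit_ball_vol CARD('n) / (1 - (1/2) powr (2 - 2 * s)))"
    using nn_integral_ball_norm_powr_le[where 'a = "real^'n" and e = "2 - p"] s
    by (intro mult_left_mono) (auto simp: p_def)
  also have "\<dots> = ennreal (D * (2 ^ CARD('n) * unit_ball_vol CARD('n) / (1 - (1/2) powr (2 - 2 * s))))"
  proof -
    have "(1/2::real) powr (2 - 2 * s) < 1"
      using s by (simp add: powr01_less_one)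
    then show ?thesis
      using \<open>0 \<le> D\<close> by (intro ennreal_mult[symmetric]) auto
  qed
  finally show ?thesis by (simp add: D_def)
qed

lemma kernelK_moment_bound_le:
  fixes n :: nat and s \<beta> CM V A :: real
  defines "p \<equiv> real n + 2 * s"
  assumes s: "0 < s" "s < 1" and "0 < \<beta>" "0 \<le> CM" "0 \<le> V"
    and c: "c_ns n s \<le> A * s * (1 - s)"
  shows "4 * CM * c_ns n s * p * \<beta> powr (- p - 1) * (2 ^ n * V / (1 - (1/2) powr (2 - 2 * s)))
    \<le> 8 * A * (real n + 2) * (\<beta> powr (- real n - 1) + \<beta> powr (- real n - 3)) * 2 ^ n * V * CM * s"
proof -
  define B where "B = \<beta> powr (- real n - 1) + \<beta> powr (- real n - 3)"
  define q where "q = (1/2::real) powr (2 - 2 * s)"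
  have "0 \<le> c_ns n s" using s by (rule c_ns_nonneg)
  have "(2 - 2 * s) / 4 \<le> 1 - q"
    unfolding q_def using s by (intro one_minus_half_powr_ge) auto
  then have "q < 1" using s by simp
  have "c_ns n s * p * \<beta> powr (- p - 1) \<le> A * s * (1 - s) * (real n + 2) * B"
    using c \<open>0 \<le> c_ns n s\<close> s \<open>0 < \<beta>\<close> powr_le_add_powr[of \<beta> "- real n - 3" "- p - 1" "- real n - 1"]
    by (intro mult_mono) (auto simp: p_def B_def)
  moreover have "0 \<le> c_ns n s * p * \<beta> powr (- p - 1)"
    using \<open>0 \<le> c_ns n s\<close> s by (simp add: p_def)
  ultimately have "4 * CM * 2 ^ n * V * (c_ns n s * p * \<beta> powr (- p - 1))
      \<le> 4 * CM * 2 ^ n * V * (A * s * (1 - s) * (real n + 2) * B)"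
    and "0 \<le> 4 * CM * 2 ^ n * V * (A * s * (1 - s) * (real n + 2) * B)"
    using \<open>0 \<le> CM\<close> \<open>0 \<le> V\<close> by (simp_all add: mult_left_mono)
  moreover have "1 / (1 - q) \<le> 2 / (1 - s)"
  proof -
    have "1 / (1 - q) \<le> 1 / ((2 - 2 * s) / 4)"
      using s \<open>(2 - 2 * s) / 4 \<le> 1 - q\<close> by (intro divide_left_mono) auto
    also have "\<dots> = 2 / (1 - s)"
      using s by (simp add: field_simps)
    finally show ?thesis .
  qed
  moreover have "0 \<le> 1 / (1 - q)" using \<open>q < 1\<close> by simp
  ultimately have "4 * CM * 2 ^ n * V * (c_ns n s * p * \<beta> powr (- p - 1)) * (1 / (1 - q))
      \<le> 4 * CM * 2 ^ n * V * (A * s * (1 - s) * (real n + 2) * B) * (2 / (1 - s))"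
    by (metis mult_mono)
  also have "\<dots> = 8 * A * (real n + 2) * B * 2 ^ n * V * CM * s"
    using s by (simp add: field_simps)
  finally show ?thesis
    unfolding B_def[symmetric] q_def[symmetric] by (simp add: mult_ac)
qed

theorem corollaryB4:
  fixes \<alpha> \<beta> :: real
  assumes "0 < \<beta>" and "\<beta> \<le> \<alpha>"
  shows "\<exists>Cstar > 0. \<forall>(s::real) (\<rho>::ereal) (M :: real^'n \<Rightarrow> real^'n \<Rightarrow> real^'n^'n) (CM::real).
     0 < s \<and> s < 1 \<and> 0 < \<rho> \<and>
     CM-lipschitz_on (UNIV \<times> eball0 \<rho>) (\<lambda>(x, y). M x y) \<and>
     (\<forall>x y \<xi>. y \<in> eball0 \<rho> \<longrightarrow>
         \<beta> * norm \<xi> \<le> norm (M (x - y) y *v \<xi>) \<and> norm (M (x - y) y *v \<xi>) \<le> \<alpha> * norm \<xi>)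
     \<longrightarrow>
     (\<forall>x::real^'n.
        (\<integral>\<^sup>+ y. indicator (ball 0 1) y *
            ennreal (norm y * \<bar>kernelK s \<rho> M x (x + y) - kernelK s \<rho> M x (x - y)\<bar>) \<partial>lborel)
        \<le> ennreal (Cstar * CM * s)) \<and>
     (SUP x::real^'n. \<integral>\<^sup>+ y. indicator (ball 0 1) y *
            ennreal (norm y * \<bar>kernelK s \<rho> M x (x + y) - kernelK s \<rho> M x (x - y)\<bar>) \<partial>lborel)
        < \<infinity>"
proof -
  obtain A where "0 < A" and c_ns_le: "\<And>s. 0 < s \<Longrightarrow> s < 1 \<Longrightarrow> c_ns CARD('n) s \<le> A * s * (1 - s)"
    using c_ns_le_mult[of "CARD('n)"] by (auto simp: Suc_le_eq)
  define Cstar where "Cstar = 8 * A * (real CARD('n) + 2) *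
    (\<beta> powr (- real CARD('n) - 1) + \<beta> powr (- real CARD('n) - 3)) * 2 ^ CARD('n) * unit_ball_vol CARD('n)"
  have "0 < Cstar" unfolding Cstar_def using \<open>0 < A\<close> \<open>0 < \<beta>\<close> by (simp add: add_pos_pos)
  moreover have "(\<integral>\<^sup>+ y. indicator (ball 0 1) y *
            ennreal (norm y * \<bar>kernelK s \<rho> M x (x + y) - kernelK s \<rho> M x (x - y)\<bar>) \<partial>lborel)
        \<le> ennreal (Cstar * CM * s)"
    if s: "0 < s" "s < 1" and lip: "CM-lipschitz_on (UNIV \<times> eball0 \<rho>) (\<lambda>(x, y). M x y)"
      and bounds: "\<forall>x y \<xi>. y \<in> eball0 \<rho> \<longrightarrow>
         \<beta> * norm \<xi> \<le> norm (M (x - y) y *v \<xi>) \<and> norm (M (x - y) y *v \<xi>) \<le> \<alpha> * norm \<xi>"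
    for s \<rho> CM and M :: "real^'n \<Rightarrow> real^'n \<Rightarrow> real^'n^'n" and x :: "real^'n"
  proof -
    have lower: "\<And>x y \<xi>. y \<in> eball0 \<rho> \<Longrightarrow> \<beta> * norm \<xi> \<le> norm (M (x - y) y *v \<xi>)"
      using bounds by blast
    note kernelK_moment_le[OF s \<open>0 < \<beta>\<close> lip lower]
    also have "ennreal (4 * CM * c_ns CARD('n) s * (real CARD('n) + 2 * s) *
        \<beta> powr (- (real CARD('n) + 2 * s) - 1) *
        (2 ^ CARD('n) * unit_ball_vol CARD('n) / (1 - (1/2) powr (2 - 2 * s))))
      \<le> ennreal (Cstar * CM * s)"
      using kernelK_moment_bound_le[OF s \<open>0 < \<beta>\<close> lipschitz_on_nonneg[OF lip]
          unit_ball_vol_nonneg c_ns_le[OF s]]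
      by (intro ennreal_leI) (simp add: Cstar_def mult_ac)
    finally show ?thesis .
  qed
  ultimately show ?thesis
    by (intro exI[of _ Cstar]) (auto intro!: le_less_trans[OF SUP_least] ennreal_less_top)
qed

end
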